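(* Let $\mathbf P=(P,\leq,{}',0,1)$ be a bounded poset which is the horizontal sum of Boolean posets $\mathbf P_{\alpha}=(P_{\alpha},\leq_{\alpha},{}'_{\alpha},0,1)$, $\alpha\in\Lambda$, and put $M(x,y)=L(U(x,y'),y)$ and $R(x,y)=L(U(L(x,y),x'))$. Then the Dedekind-MacNeille completion $\mathrm{DM}(\mathbf P)$ is a complete orthomodular lattice. Moreover, $\mathrm{DM}(\mathbf P)$ is a left residuated lattice with respect to the operations $x\odot y=(x\vee y')\wedge y$ and $x\to y=(x\wedge y)\vee x'$ obtained from $M$ and $R$ by the DM-transformation.
   Context: For $M\subseteq P$, $U(M)$ and $L(M)$ are the sets of upper and lower bounds of $M$; $U(a,b)=U(\{a,b\})$, $L(a,b)=L(\{a,b\})$. A poset with complementation is a bounded poset with antitone involution $'$ ($x\le y\Rightarrow y'\le x'$, $x''=x$) with $L(x,x')=\{0\}$, $U(x,x')=\{1\}$. A Boolean poset is a bounded poset with complementation $'$ that is distributive, i.e. $L(U(x,y),z)=L(U(L(x,z),L(y,z)))$ for all $x,y,z$. The horizontal sum of bounded posets is their disjoint union with bottoms identified to $0$ and tops identified to $1$. The Dedekind-MacNeille completion $\mathrm{DM}(\mathbf P)$ is the complete lattice of subsets $B\subseteq P$ with $L(U(B))=B$ ordered by inclusion, $P$ embedded via $x\mapsto L(\{x\})$, with antitone involution $X'=L(\{u'\mid u\in X\})$. The DM-transformation replaces $U(x,y)$ or $LU(x,y)$ by $x\vee y$ and $L(x,y)$ by $x\wedge y$. A lattice with complementation is orthomodular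 if $x\vee y=((x\vee y)\wedge y')\vee y$. A lattice with top $1$ is left residuated with respect to binary operations $\odot,\to$ if $x\odot 1=x=1\odot x$ and $x\odot y\le z \iff x\le y\to z$ for all $x,y,z$ ($\odot$ need not be associative or commutative). *)

theory Defs
  imports Main
begin

definition ubs :: "'a set \<Rightarrow> ('a \<Rightarrow> 'a \<Rightarrow> bool) \<Rightarrow> 'a set \<Rightarrow> 'a set" where
  "ubs P le M = {x \<in> P. \<forall>m\<in>M. le m x}"

definition lbs :: "'a set \<Rightarrow> ('a \<Rightarrow> 'a \<Rightarrow> bool) \<Rightarrow> 'a set \<Rightarrow> 'a set" where
  "lbs P le M = {x \<in> P. \<forall>m\<in>M. le x m}"

definition poset_on :: "'a set \<Rightarrow> ('a \<Rightarrow> 'a \<Rightarrow> bool) \<Rightarrow> bool" where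
  "poset_on P le \<longleftrightarrow>
     (\<forall>x\<in>P. le x x) \<and>
     (\<forall>x\<in>P. \<forall>y\<in>P. le x y \<and> le y x \<longrightarrow> x = y) \<and>
     (\<forall>x\<in>P. \<forall>y\<in>P. \<forall>z\<in>P. le x y \<and> le y z \<longrightarrow> le x z)"

definition bounded_poset :: "'a set \<Rightarrow> ('a \<Rightarrow> 'a \<Rightarrow> bool) \<Rightarrow> 'a \<Rightarrow> 'a \<Rightarrow> bool" where
  "bounded_poset P le zero one \<longleftrightarrow> poset_on P le \<and> zero \<in> P \<and> one \<in> P \<and>
     (\<forall>x\<in>P. le zero x \<and> le x one)"

definition poset_with_complementation ::
  "'a set \<Rightarrow> ('a \<Rightarrow> 'a \<Rightarrow> bool) \<Rightarrow> ('a \<Rightarrow> 'a) \<Rightarrow> 'a \<Rightarrow> 'a \<Rightarrow> bool" where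
  "poset_with_complementation P le c zero one \<longleftrightarrow> bounded_poset P le zero one \<and>
     (\<forall>x\<in>P. c x \<in> P) \<and>
     (\<forall>x\<in>P. \<forall>y\<in>P. le x y \<longrightarrow> le (c y) (c x)) \<and>
     (\<forall>x\<in>P. c (c x) = x) \<and>
     (\<forall>x\<in>P. lbs P le {x, c x} = {zero} \<and> ubs P le {x, c x} = {one})"

definition distributive_poset :: "'a set \<Rightarrow> ('a \<Rightarrow> 'a \<Rightarrow> bool) \<Rightarrow> bool" where
  "distributive_poset P le \<longleftrightarrow>
     (\<forall>x\<in>P. \<forall>y\<in>P. \<forall>z\<in>P.
        lbs P le (ubs P le {x, y} \<union> {z}) =
        lbs P le (ubs P le (lbs P le {x, z} \<union> lbs P le {y, z})))"

definition boolean_poset ::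
  "'a set \<Rightarrow> ('a \<Rightarrow> 'a \<Rightarrow> bool) \<Rightarrow> ('a \<Rightarrow> 'a) \<Rightarrow> 'a \<Rightarrow> 'a \<Rightarrow> bool" where
  "boolean_poset P le c zero one \<longleftrightarrow>
     poset_with_complementation P le c zero one \<and> distributive_poset P le"

definition horizontal_sum ::
  "'a set \<Rightarrow> ('a \<Rightarrow> 'a \<Rightarrow> bool) \<Rightarrow> ('a \<Rightarrow> 'a) \<Rightarrow> 'a \<Rightarrow> 'a \<Rightarrow> 'i set \<Rightarrow> ('i \<Rightarrow> 'a set) \<Rightarrow> bool" where
  "horizontal_sum P le c zero one Lam Q \<longleftrightarrow>
     P = (\<Union>a\<in>Lam. Q a) \<and>
     (\<forall>a\<in>Lam. boolean_poset (Q a) le c zero one) \<and>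
     (\<forall>a\<in>Lam. \<forall>b\<in>Lam. a \<noteq> b \<longrightarrow> Q a \<inter> Q b = {zero, one}) \<and>
     (\<forall>x\<in>P. \<forall>y\<in>P. le x y \<longleftrightarrow> (\<exists>a\<in>Lam. x \<in> Q a \<and> y \<in> Q a \<and> le x y))"

definition dm :: "'a set \<Rightarrow> ('a \<Rightarrow> 'a \<Rightarrow> bool) \<Rightarrow> 'a set set" where
  "dm P le = {B. B \<subseteq> P \<and> lbs P le (ubs P le B) = B}"

definition dm_compl :: "'a set \<Rightarrow> ('a \<Rightarrow> 'a \<Rightarrow> bool) \<Rightarrow> ('a \<Rightarrow> 'a) \<Rightarrow> 'a set \<Rightarrow> 'a set" where
  "dm_compl P le c X = lbs P le (c ` X)"

definition dm_embed :: "'a set \<Rightarrow> ('a \<Rightarrow> 'a \<Rightarrow> bool) \<Rightarrow> 'a \<Rightarrow> 'a set" where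
  "dm_embed P le x = lbs P le {x}"

definition is_lub :: "'b set \<Rightarrow> ('b \<Rightarrow> 'b \<Rightarrow> bool) \<Rightarrow> 'b set \<Rightarrow> 'b \<Rightarrow> bool" where
  "is_lub D le S x \<longleftrightarrow> x \<in> D \<and> (\<forall>s\<in>S. le s x) \<and> (\<forall>y\<in>D. (\<forall>s\<in>S. le s y) \<longrightarrow> le x y)"

definition is_glb :: "'b set \<Rightarrow> ('b \<Rightarrow> 'b \<Rightarrow> bool) \<Rightarrow> 'b set \<Rightarrow> 'b \<Rightarrow> bool" where
  "is_glb D le S x \<longleftrightarrow> x \<in> D \<and> (\<forall>s\<in>S. le x s) \<and> (\<forall>y\<in>D. (\<forall>s\<in>S. le y s) \<longrightarrow> le y x)"

definition lattice_on :: "'b set \<Rightarrow> ('b \<Rightarrow> 'b \<Rightarrow> bool) \<Rightarrow> bool" where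
  "lattice_on D le \<longleftrightarrow> poset_on D le \<and>
     (\<forall>x\<in>D. \<forall>y\<in>D. (\<exists>z. is_lub D le {x, y} z) \<and> (\<exists>z. is_glb D le {x, y} z))"

definition complete_lattice_on :: "'b set \<Rightarrow> ('b \<Rightarrow> 'b \<Rightarrow> bool) \<Rightarrow> bool" where
  "complete_lattice_on D le \<longleftrightarrow> poset_on D le \<and>
     (\<forall>S. S \<subseteq> D \<longrightarrow> (\<exists>z. is_lub D le S z) \<and> (\<exists>z. is_glb D le S z))"

definition join_on :: "'b set \<Rightarrow> ('b \<Rightarrow> 'b \<Rightarrow> bool) \<Rightarrow> 'b \<Rightarrow> 'b \<Rightarrow> 'b" where
  "join_on D le x y = (THE z. is_lub D le {x, y} z)"

definition meet_on :: "'b set \<Rightarrow> ('b \<Rightarrow> 'b \<Rightarrow> bool) \<Rightarrow> 'b \<Rightarrow> 'b \<Rightarrow> 'b" where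
  "meet_on D le x y = (THE z. is_glb D le {x, y} z)"

definition lattice_with_complementation ::
  "'b set \<Rightarrow> ('b \<Rightarrow> 'b \<Rightarrow> bool) \<Rightarrow> ('b \<Rightarrow> 'b) \<Rightarrow> 'b \<Rightarrow> 'b \<Rightarrow> bool" where
  "lattice_with_complementation D le c zero one \<longleftrightarrow>
     lattice_on D le \<and> bounded_poset D le zero one \<and>
     (\<forall>x\<in>D. c x \<in> D) \<and>
     (\<forall>x\<in>D. \<forall>y\<in>D. le x y \<longrightarrow> le (c y) (c x)) \<and>
     (\<forall>x\<in>D. c (c x) = x) \<and>
     (\<forall>x\<in>D. meet_on D le x (c x) = zero \<and> join_on D le x (c x) = one)"

definition orthomodular_lattice ::
  "'b set \<Rightarrow> ('b \<Rightarrow> 'b \<Rightarrow> bool) \<Rightarrow> ('b \<Rightarrow> 'b) \<Rightarrow> 'b \<Rightarrow> 'b \<Rightarrow> bool" where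
  "orthomodular_lattice D le c zero one \<longleftrightarrow>
     lattice_with_complementation D le c zero one \<and>
     (\<forall>x\<in>D. \<forall>y\<in>D. join_on D le x y =
        join_on D le (meet_on D le (join_on D le x y) (c y)) y)"

definition left_residuated ::
  "'b set \<Rightarrow> ('b \<Rightarrow> 'b \<Rightarrow> bool) \<Rightarrow> 'b \<Rightarrow> ('b \<Rightarrow> 'b \<Rightarrow> 'b) \<Rightarrow> ('b \<Rightarrow> 'b \<Rightarrow> 'b) \<Rightarrow> bool" where
  "left_residuated D le one mult imp \<longleftrightarrow>
     lattice_on D le \<and> one \<in> D \<and> (\<forall>x\<in>D. le x one) \<and>
     (\<forall>x\<in>D. \<forall>y\<in>D. mult x y \<in> D \<and> imp x y \<in> D) \<and>
     (\<forall>x\<in>D. mult x one = x \<and> mult one x = x) \<and>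
     (\<forall>x\<in>D. \<forall>y\<in>D. \<forall>z\<in>D. le (mult x y) z \<longleftrightarrow> le x (imp y z))"

end

theory Submission
  imports Defs
begin

(*
  The Dedekind-MacNeille completion of any poset is a complete lattice of closed down-sets whose
  meets are intersections.  An antitone involution with x \<le> x' only for x = 0 lifts to the
  orthocomplementation X \<mapsto> L(X') of the completion.  This ortholattice is orthomodular as soon
  as X \<subseteq> Y and X' \<inter> Y = {0} force X = Y, and the orthomodular law alone yields the
  residuation (x \<or> y') \<and> y \<le> z \<longleftrightarrow> x \<le> (y \<and> z) \<or> y'.

  For a horizontal sum of Boolean posets the criterion holds: take y \<in> Y - X, a nontrivial element
  of some block, and an upper bound u of X not above y.  If u lies in the block of y, distributivity
  there gives some 0 \<noteq> z \<le> y, u', and z \<in> X' \<inter> Y.  Otherwise a nontrivial x \<le> u of X lies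
  in another block; as nontrivial elements of different blocks have 1 as their only common upper
  bound, Y = P, contradicting X' \<inter> Y = {0} again.
*)

lemma is_lub_unique: "is_lub D (\<subseteq>) S X \<Longrightarrow> is_lub D (\<subseteq>) S Y \<Longrightarrow> X = Y"
  unfolding is_lub_def by (meson subset_antisym)

lemma is_glb_unique: "is_glb D (\<subseteq>) S X \<Longrightarrow> is_glb D (\<subseteq>) S Y \<Longrightarrow> X = Y"
  unfolding is_glb_def by (meson subset_antisym)

locale dm_closure =
  fixes P :: "'a set" and le :: "'a \<Rightarrow> 'a \<Rightarrow> bool"
begin

abbreviation L :: "'a set \<Rightarrow> 'a set" where "L \<equiv> lbs P le"
abbreviation U :: "'a set \<Rightarrow> 'a set" where "U \<equiv> ubs P le"
abbreviation D :: "'a set set" where "D \<equiv> dm P le"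
abbreviation dm_join :: "'a set \<Rightarrow> 'a set \<Rightarrow> 'a set" where "dm_join X Y \<equiv> L (U (X \<union> Y))"

lemma lbs_iff: "x \<in> L A \<longleftrightarrow> x \<in> P \<and> (\<forall>m\<in>A. le x m)"
  unfolding lbs_def by simp

lemma ubs_iff: "x \<in> U A \<longleftrightarrow> x \<in> P \<and> (\<forall>m\<in>A. le m x)"
  unfolding ubs_def by simp

lemma lbs_subset: "L A \<subseteq> P" and ubs_subset: "U A \<subseteq> P"
  unfolding lbs_def ubs_def by auto

lemma lbs_antimono: "A \<subseteq> B \<Longrightarrow> L B \<subseteq> L A"
  unfolding lbs_def by blast

lemma ubs_antimono: "A \<subseteq> B \<Longrightarrow> U B \<subseteq> U A"
  unfolding ubs_def by blast

lemma subset_lbs_ubs: "A \<subseteq> P \<Longrightarrow> A \<subseteq> L (U A)"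
  unfolding lbs_def ubs_def by blast

lemma subset_ubs_lbs: "A \<subseteq> P \<Longrightarrow> A \<subseteq> U (L A)"
  unfolding lbs_def ubs_def by blast

lemma lbs_ubs_lbs: "A \<subseteq> P \<Longrightarrow> L (U (L A)) = L A"
  by (simp add: lbs_antimono lbs_subset subset_lbs_ubs subset_ubs_lbs subset_antisym)

lemma dm_iff: "X \<in> D \<longleftrightarrow> X \<subseteq> P \<and> L (U X) = X"
  unfolding dm_def by simp

lemma dm_subset: "X \<in> D \<Longrightarrow> X \<subseteq> P"
  by (simp add: dm_iff)

lemma dm_closed: "X \<in> D \<Longrightarrow> L (U X) = X"
  by (simp add: dm_iff)

lemma lbs_in_dm: "A \<subseteq> P \<Longrightarrow> L A \<in> D"
  by (simp add: dm_iff lbs_ubs_lbs lbs_subset)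

lemma P_in_dm: "P \<in> D"
  by (simp add: dm_iff lbs_subset subset_antisym subset_lbs_ubs)

lemma dm_closure_least: "X \<in> D \<Longrightarrow> A \<subseteq> X \<Longrightarrow> L (U A) \<subseteq> X"
  by (metis dm_closed lbs_antimono ubs_antimono)

lemma Int_in_dm: "X \<in> D \<Longrightarrow> Y \<in> D \<Longrightarrow> X \<inter> Y \<in> D"
  by (simp add: dm_iff dm_closure_least subset_antisym subset_lbs_ubs le_infI1)

lemma dm_join_in_dm: "dm_join X Y \<in> D"
  by (simp add: lbs_in_dm ubs_subset)

lemma dm_join_upper1: "X \<in> D \<Longrightarrow> Y \<in> D \<Longrightarrow> X \<subseteq> dm_join X Y"
  and dm_join_upper2: "X \<in> D \<Longrightarrow> Y \<in> D \<Longrightarrow> Y \<subseteq> dm_join X Y"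
  using subset_lbs_ubs[of "X \<union> Y"] dm_subset by blast+

lemma dm_join_least: "Z \<in> D \<Longrightarrow> X \<subseteq> Z \<Longrightarrow> Y \<subseteq> Z \<Longrightarrow> dm_join X Y \<subseteq> Z"
  by (simp add: dm_closure_least)

lemma dm_join_mono: "X \<subseteq> X' \<Longrightarrow> dm_join X Y \<subseteq> dm_join X' Y"
  by (intro lbs_antimono ubs_antimono) blast

lemma dm_join_absorb: "X \<in> D \<Longrightarrow> Y \<subseteq> X \<Longrightarrow> dm_join X Y = X"
  by (simp add: dm_closed Un_absorb2)

lemma is_lub_dm: "X \<in> D \<Longrightarrow> Y \<in> D \<Longrightarrow> is_lub D (\<subseteq>) {X, Y} (dm_join X Y)"
  unfolding is_lub_def using dm_join_in_dm dm_join_upper1 dm_join_upper2 dm_join_least by auto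

lemma is_glb_dm: "X \<in> D \<Longrightarrow> Y \<in> D \<Longrightarrow> is_glb D (\<subseteq>) {X, Y} (X \<inter> Y)"
  unfolding is_glb_def using Int_in_dm by auto

lemma join_on_dm: "X \<in> D \<Longrightarrow> Y \<in> D \<Longrightarrow> join_on D (\<subseteq>) X Y = dm_join X Y"
  unfolding join_on_def
  by (rule the_equality) (simp_all add: is_lub_dm is_lub_unique)

lemma meet_on_dm: "X \<in> D \<Longrightarrow> Y \<in> D \<Longrightarrow> meet_on D (\<subseteq>) X Y = X \<inter> Y"
  unfolding meet_on_def
  by (rule the_equality) (simp_all add: is_glb_dm is_glb_unique)

lemma poset_on_dm: "poset_on D (\<subseteq>)"
  unfolding poset_on_def by blast

lemma lattice_on_dm: "lattice_on D (\<subseteq>)"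
  unfolding lattice_on_def using poset_on_dm is_lub_dm is_glb_dm by blast

lemma complete_lattice_on_dm: "complete_lattice_on D (\<subseteq>)"
  unfolding complete_lattice_on_def
proof (intro conjI allI impI poset_on_dm)
  fix S assume S: "S \<subseteq> D"
  have "is_lub D (\<subseteq>) S (L (U (\<Union>S)))"
    unfolding is_lub_def
  proof (intro conjI ballI impI)
    show "L (U (\<Union>S)) \<in> D" by (rule lbs_in_dm[OF ubs_subset])
    show "X \<subseteq> L (U (\<Union>S))" if "X \<in> S" for X
      using that S dm_subset subset_lbs_ubs[of "\<Union>S"] by blast
    show "L (U (\<Union>S)) \<subseteq> Y" if "Y \<in> D" "\<forall>X\<in>S. X \<subseteq> Y" for Y
      using that by (simp add: dm_closure_least Sup_least)
  qed
  then show "\<exists>Z. is_lub D (\<subseteq>) S Z" by blast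
  have "L (U (P \<inter> \<Inter>S)) \<subseteq> X" if "X \<in> S" for X
    using that S dm_closure_least[of X "P \<inter> \<Inter>S"] by blast
  then have "L (U (P \<inter> \<Inter>S)) \<subseteq> P \<inter> \<Inter>S"
    using lbs_subset by blast
  then have "P \<inter> \<Inter>S \<in> D"
    by (simp add: dm_iff subset_antisym subset_lbs_ubs)
  then have "is_glb D (\<subseteq>) S (P \<inter> \<Inter>S)"
    unfolding is_glb_def using dm_subset by blast
  then show "\<exists>Z. is_glb D (\<subseteq>) S Z" by blast
qed

end

lemma poset_with_complementationI:
  assumes bounded: "bounded_poset P le zero one"
    and compl_in_P: "\<And>x. x \<in> P \<Longrightarrow> c x \<in> P"
    and compl_antimono: "\<And>x y. x \<in> P \<Longrightarrow> y \<in> P \<Longrightarrow> le x y \<Longrightarrow> le (c y) (c x)"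
    and compl_compl: "\<And>x. x \<in> P \<Longrightarrow> c (c x) = x"
    and le_compl_self: "\<And>x. x \<in> P \<Longrightarrow> le x (c x) \<Longrightarrow> x = zero"
  shows "poset_with_complementation P le c zero one"
proof -
  interpret dm_closure P le .
  have trans_le: "\<And>x y z. x \<in> P \<Longrightarrow> y \<in> P \<Longrightarrow> z \<in> P \<Longrightarrow> le x y \<Longrightarrow> le y z \<Longrightarrow> le x z"
    and antisym_le: "\<And>x y. x \<in> P \<Longrightarrow> y \<in> P \<Longrightarrow> le x y \<Longrightarrow> le y x \<Longrightarrow> x = y"
    and bot: "zero \<in> P" "\<And>x. x \<in> P \<Longrightarrow> le zero x"
    and top: "one \<in> P" "\<And>x. x \<in> P \<Longrightarrow> le x one"
    using bounded unfolding bounded_poset_def poset_on_def by blast+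
  have "le (c (c one)) (c zero)"
    using compl_antimono[OF bot(1) compl_in_P[OF top(1)] bot(2)[OF compl_in_P[OF top(1)]]] .
  then have compl_zero: "c zero = one"
    using antisym_le compl_in_P top bot(1) compl_compl by metis
  have lbs_compl: "L {x, c x} = {zero}" if x: "x \<in> P" for x
  proof -
    have "z = zero" if "z \<in> L {x, c x}" for z
    proof -
      have z: "z \<in> P" "le z x" "le z (c x)" using that by (auto simp: lbs_iff)
      have "le x (c z)" using compl_antimono[OF z(1) compl_in_P[OF x] z(3)] compl_compl x by simp
      then show ?thesis using le_compl_self z trans_le[OF z(1) x compl_in_P[OF z(1)]] by blast
    qed
    moreover have "zero \<in> L {x, c x}" using bot x compl_in_P by (simp add: lbs_iff)
    ultimately show ?thesis by blast
  qed
  have ubs_compl: "U {x, c x} = {one}" if x: "x \<in> P" for x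
  proof -
    have "u = one" if "u \<in> U {x, c x}" for u
    proof -
      have u: "u \<in> P" "le x u" "le (c x) u" using that by (auto simp: ubs_iff)
      have "c u \<in> L {x, c x}"
        using compl_antimono[OF x u(1) u(2)] compl_antimono[OF compl_in_P[OF x] u(1) u(3)]
          compl_compl x compl_in_P u(1) by (simp add: lbs_iff)
      then have "c u = zero" using lbs_compl x by blast
      then show ?thesis using compl_compl u(1) compl_zero by metis
    qed
    moreover have "one \<in> U {x, c x}" using top x compl_in_P by (simp add: ubs_iff)
    ultimately show ?thesis by blast
  qed
  show ?thesis
    unfolding poset_with_complementation_def
    using bounded compl_in_P compl_antimono compl_compl lbs_compl ubs_compl by blast
qed

locale dm_orthoposet = dm_closure +
  fixes c :: "'a \<Rightarrow> 'a" and zero one :: 'a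
  assumes complementation: "poset_with_complementation P le c zero one"
begin

abbreviation cm :: "'a set \<Rightarrow> 'a set" where "cm \<equiv> dm_compl P le c"

lemma
  shows refl_le: "x \<in> P \<Longrightarrow> le x x"
    and trans_le: "x \<in> P \<Longrightarrow> y \<in> P \<Longrightarrow> z \<in> P \<Longrightarrow> le x y \<Longrightarrow> le y z \<Longrightarrow> le x z"
    and antisym_le: "x \<in> P \<Longrightarrow> y \<in> P \<Longrightarrow> le x y \<Longrightarrow> le y x \<Longrightarrow> x = y"
    and zero_in_P: "zero \<in> P" and zero_le: "x \<in> P \<Longrightarrow> le zero x"
    and one_in_P: "one \<in> P" and le_one: "x \<in> P \<Longrightarrow> le x one"
    and compl_in_P: "x \<in> P \<Longrightarrow> c x \<in> P"
    and compl_antimono: "x \<in> P \<Longrightarrow> y \<in> P \<Longrightarrow> le x y \<Longrightarrow> le (c y) (c x)"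
    and compl_compl: "x \<in> P \<Longrightarrow> c (c x) = x"
    and lbs_compl: "x \<in> P \<Longrightarrow> L {x, c x} = {zero}"
    and ubs_compl: "x \<in> P \<Longrightarrow> U {x, c x} = {one}"
  using complementation
  unfolding poset_with_complementation_def bounded_poset_def poset_on_def by blast+

lemma le_compl_self: "x \<in> P \<Longrightarrow> le x (c x) \<Longrightarrow> x = zero"
proof -
  assume "x \<in> P" "le x (c x)"
  then have "x \<in> L {x, c x}" by (simp add: lbs_iff refl_le)
  with \<open>x \<in> P\<close> show ?thesis by (simp add: lbs_compl)
qed

lemma compl_zero: "c zero = one"
proof -
  have "c zero \<in> U {zero, c zero}"
    by (simp add: ubs_iff refl_le zero_le compl_in_P zero_in_P)
  then show ?thesis using ubs_compl[OF zero_in_P] by blast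
qed

lemma lbs_one: "L {one} = P"
  by (auto simp: lbs_iff le_one)

lemma lbs_zero: "L {zero} = {zero}"
  using antisym_le zero_le zero_in_P refl_le by (auto simp: lbs_iff)

lemma zero_in_dm: "X \<in> D \<Longrightarrow> zero \<in> X"
  by (metis dm_closed lbs_iff ubs_iff zero_in_P zero_le)

lemma dm_down_closed: "X \<in> D \<Longrightarrow> x \<in> X \<Longrightarrow> z \<in> P \<Longrightarrow> le z x \<Longrightarrow> z \<in> X"
proof -
  assume X: "X \<in> D" and x: "x \<in> X" and z: "z \<in> P" "le z x"
  have "x \<in> P" using X x dm_subset by blast
  then have "z \<in> L (U X)"
    using x z trans_le[of z x] by (auto simp: lbs_iff ubs_iff)
  then show ?thesis using X dm_closed by simp
qed

lemma compl_image_lbs: "A \<subseteq> P \<Longrightarrow> c ` L A = U (c ` A)"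
proof (intro subset_antisym subsetI)
  fix y assume "A \<subseteq> P" "y \<in> c ` L A"
  then show "y \<in> U (c ` A)"
    by (auto simp: lbs_iff ubs_iff compl_in_P compl_antimono)
next
  fix y assume A: "A \<subseteq> P" and y: "y \<in> U (c ` A)"
  then have "c y \<in> L A"
    using compl_antimono[of "c a" y for a] by (force simp: lbs_iff ubs_iff compl_in_P compl_compl)
  then show "y \<in> c ` L A"
    using y compl_compl by (metis image_eqI subsetD ubs_subset)
qed

lemma compl_image_compl_image: "A \<subseteq> P \<Longrightarrow> c ` c ` A = A"
  by (force simp: image_image compl_compl)

lemma dm_compl_eq: "cm X = L (c ` X)"
  by (simp add: dm_compl_def)

lemma dm_compl_in_dm: "X \<subseteq> P \<Longrightarrow> cm X \<in> D"
  by (auto simp: dm_compl_eq intro!: lbs_in_dm compl_in_P)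

lemma in_dm_compl_if_le_compl_ubs:
  assumes X: "X \<subseteq> P" and u: "u \<in> U X" and z: "z \<in> P" "le z (c u)"
  shows "z \<in> cm X"
proof -
  have "le z (c x)" if x: "x \<in> X" for x
  proof -
    have "le (c u) (c x)" using x X u by (intro compl_antimono) (auto simp: ubs_iff)
    then show ?thesis using x X u z compl_in_P ubs_subset trans_le by blast
  qed
  then show ?thesis using z by (simp add: dm_compl_eq lbs_iff)
qed

lemma dm_compl_closed: "X \<in> D \<Longrightarrow> cm X \<in> D"
  by (simp add: dm_compl_in_dm dm_subset)

lemma dm_compl_antimono: "X \<subseteq> Y \<Longrightarrow> cm Y \<subseteq> cm X"
  by (simp add: dm_compl_eq image_mono lbs_antimono)

lemma dm_compl_compl: "X \<in> D \<Longrightarrow> cm (cm X) = X"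
proof -
  assume X: "X \<in> D"
  then have XP: "X \<subseteq> P" by (rule dm_subset)
  have "cm (cm X) = L (c ` L (c ` X))" by (simp add: dm_compl_eq)
  also have "c ` L (c ` X) = U (c ` c ` X)"
    using XP compl_in_P by (intro compl_image_lbs) blast
  also have "c ` c ` X = X" using XP by (rule compl_image_compl_image)
  finally show ?thesis using X by (simp add: dm_closed)
qed

lemma dm_Int_compl: "X \<in> D \<Longrightarrow> X \<inter> cm X = {zero}"
  using dm_subset[of X] le_compl_self zero_in_dm dm_compl_in_dm[of X]
  by (auto simp: dm_compl_eq lbs_iff)

lemma dm_compl_zero: "cm {zero} = P"
  by (simp add: dm_compl_eq compl_zero lbs_one)

lemma dm_compl_P: "cm P = {zero}"
  using dm_Int_compl[OF P_in_dm] dm_compl_in_dm[of P] dm_subset by blast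

lemma dm_eq_P_if_compl_eq_zero: "X \<in> D \<Longrightarrow> cm X = {zero} \<Longrightarrow> X = P"
  using dm_compl_compl dm_compl_zero by metis

lemma dm_compl_join: "A \<in> D \<Longrightarrow> B \<in> D \<Longrightarrow> cm (dm_join A B) = cm A \<inter> cm B"
proof (rule subset_antisym)
  assume A: "A \<in> D" and B: "B \<in> D"
  show "cm (dm_join A B) \<subseteq> cm A \<inter> cm B"
    using dm_compl_antimono dm_join_upper1[OF A B] dm_join_upper2[OF A B] by blast
  have AB: "cm A \<inter> cm B \<in> D"
    using A B by (simp add: Int_in_dm dm_compl_closed)
  have "dm_join A B \<subseteq> cm (cm A \<inter> cm B)"
    using A B AB dm_compl_antimono[of "cm A \<inter> cm B"] dm_compl_compl
    by (intro dm_join_least dm_compl_closed) auto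
  then show "cm A \<inter> cm B \<subseteq> cm (dm_join A B)"
    using dm_compl_antimono dm_compl_compl[OF AB] by metis
qed

lemma dm_join_compl: "X \<in> D \<Longrightarrow> dm_join X (cm X) = P"
proof -
  assume X: "X \<in> D"
  then have "cm (dm_join X (cm X)) = {zero}"
    using dm_compl_join dm_compl_closed dm_compl_compl dm_Int_compl by (simp add: Int_commute)
  then show ?thesis
    using dm_compl_compl[OF dm_join_in_dm] dm_compl_zero by metis
qed

lemma lattice_with_complementation_dm:
  "lattice_with_complementation D (\<subseteq>) cm (dm_embed P le zero) (dm_embed P le one)"
  unfolding lattice_with_complementation_def dm_embed_def lbs_zero lbs_one
proof (intro conjI ballI impI lattice_on_dm)
  show "bounded_poset D (\<subseteq>) {zero} P"
    unfolding bounded_poset_def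
    using poset_on_dm lbs_in_dm[of "{zero}"] lbs_zero zero_in_P P_in_dm zero_in_dm dm_subset by auto
  fix X assume X: "X \<in> D"
  show "cm X \<in> D" using X by (rule dm_compl_closed)
  show "cm (cm X) = X" using X by (rule dm_compl_compl)
  show "meet_on D (\<subseteq>) X (cm X) = {zero}"
    using X by (simp add: meet_on_dm dm_compl_closed dm_Int_compl)
  show "join_on D (\<subseteq>) X (cm X) = P"
    using X by (simp add: join_on_dm dm_compl_closed dm_join_compl)
  show "cm Y \<subseteq> cm X" if "X \<subseteq> Y" for Y
    using that by (rule dm_compl_antimono)
qed

end

(* For ortholattices this criterion is equivalent to the orthomodular law. *)
locale dm_orthomodular = dm_orthoposet +
  assumes dm_orthomodular_criterion:
    "X \<in> D \<Longrightarrow> Y \<in> D \<Longrightarrow> X \<subseteq> Y \<Longrightarrow> cm X \<inter> Y = {zero} \<Longrightarrow> X = Y"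
begin

lemma dm_orthomodular_law:
  assumes X: "X \<in> D" and Y: "Y \<in> D"
  shows "dm_join (dm_join X Y \<inter> cm Y) Y = dm_join X Y"
proof -
  let ?W = "dm_join X Y \<inter> cm Y"
  have W: "?W \<in> D" using Y by (simp add: Int_in_dm dm_join_in_dm dm_compl_closed)
  have "dm_join ?W Y \<subseteq> dm_join X Y"
    using X Y by (intro dm_join_least dm_join_in_dm dm_join_upper2) auto
  moreover have "cm (dm_join ?W Y) \<inter> dm_join X Y = {zero}"
    using dm_Int_compl[OF W] W Y by (auto simp: dm_compl_join)
  ultimately show ?thesis
    by (rule dm_orthomodular_criterion[OF dm_join_in_dm dm_join_in_dm])
qed

lemma dm_orthomodular_below: "X \<in> D \<Longrightarrow> Y \<in> D \<Longrightarrow> Y \<subseteq> X \<Longrightarrow> dm_join (X \<inter> cm Y) Y = X"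
  using dm_orthomodular_law[of X Y] by (simp add: dm_join_absorb)

lemma dm_orthomodular_below_dual:
  assumes W: "W \<in> D" and Y: "Y \<in> D" and WY: "W \<subseteq> Y"
  shows "dm_join W (cm Y) \<inter> Y = W"
proof (rule subset_antisym)
  have V: "cm W \<inter> Y \<in> D" using W Y by (simp add: Int_in_dm dm_compl_closed)
  have "dm_join (cm W \<inter> Y) (cm Y) = cm W"
    using dm_orthomodular_below[of "cm W" "cm Y"] W Y WY
    by (simp add: dm_compl_closed dm_compl_antimono dm_compl_compl)
  then have "cm (cm W \<inter> Y) \<inter> Y = W"
    using dm_compl_join[OF V dm_compl_closed[OF Y]] W Y by (simp add: dm_compl_compl)
  moreover have "dm_join W (cm Y) \<subseteq> cm (cm W \<inter> Y)"
    using W Y V dm_compl_antimono[of "cm W \<inter> Y"] dm_compl_compl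
    by (intro dm_join_least dm_compl_closed) auto
  ultimately show "dm_join W (cm Y) \<inter> Y \<subseteq> W" by blast
  show "W \<subseteq> dm_join W (cm Y) \<inter> Y"
    using W Y WY dm_join_upper1 dm_compl_closed by blast
qed

lemma dm_residuation:
  assumes X: "X \<in> D" and Y: "Y \<in> D" and Z: "Z \<in> D"
  shows "dm_join X (cm Y) \<inter> Y \<subseteq> Z \<longleftrightarrow> X \<subseteq> dm_join (Y \<inter> Z) (cm Y)"
proof
  have cY: "cm Y \<in> D" using Y by (rule dm_compl_closed)
  assume "dm_join X (cm Y) \<inter> Y \<subseteq> Z"
  then have "dm_join (dm_join X (cm Y) \<inter> Y) (cm Y) \<subseteq> dm_join (Y \<inter> Z) (cm Y)"
    by (intro dm_join_mono) blast
  moreover have "dm_join (dm_join X (cm Y) \<inter> Y) (cm Y) = dm_join X (cm Y)"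
    using dm_orthomodular_below[OF dm_join_in_dm cY dm_join_upper2[OF X cY]] Y
    by (simp add: dm_compl_compl)
  ultimately show "X \<subseteq> dm_join (Y \<inter> Z) (cm Y)"
    using dm_join_upper1[OF X cY] by blast
next
  have YZ: "Y \<inter> Z \<in> D" using Y Z by (rule Int_in_dm)
  assume "X \<subseteq> dm_join (Y \<inter> Z) (cm Y)"
  then have "dm_join X (cm Y) \<subseteq> dm_join (Y \<inter> Z) (cm Y)"
    using YZ Y by (intro dm_join_least dm_join_in_dm dm_join_upper2 dm_compl_closed)
  then have "dm_join X (cm Y) \<inter> Y \<subseteq> dm_join (Y \<inter> Z) (cm Y) \<inter> Y" by blast
  also have "\<dots> = Y \<inter> Z"
    using YZ Y by (intro dm_orthomodular_below_dual) auto
  finally show "dm_join X (cm Y) \<inter> Y \<subseteq> Z" by blast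
qed

lemma orthomodular_lattice_dm:
  "orthomodular_lattice D (\<subseteq>) cm (dm_embed P le zero) (dm_embed P le one)"
  unfolding orthomodular_lattice_def
proof (intro conjI ballI lattice_with_complementation_dm)
  fix X Y assume X: "X \<in> D" and Y: "Y \<in> D"
  then show "join_on D (\<subseteq>) X Y =
      join_on D (\<subseteq>) (meet_on D (\<subseteq>) (join_on D (\<subseteq>) X Y) (cm Y)) Y"
    by (simp add: join_on_dm meet_on_dm dm_join_in_dm dm_compl_closed Int_in_dm
        dm_orthomodular_law)
qed

lemma left_residuated_dm:
  "left_residuated D (\<subseteq>) (dm_embed P le one)
     (\<lambda>X Y. meet_on D (\<subseteq>) (join_on D (\<subseteq>) X (cm Y)) Y)
     (\<lambda>X Y. join_on D (\<subseteq>) (meet_on D (\<subseteq>) X Y) (cm X))"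
proof -
  have mult: "meet_on D (\<subseteq>) (join_on D (\<subseteq>) X (cm Y)) Y = dm_join X (cm Y) \<inter> Y"
    and imp: "join_on D (\<subseteq>) (meet_on D (\<subseteq>) X Y) (cm X) = dm_join (X \<inter> Y) (cm X)"
    if "X \<in> D" "Y \<in> D" for X Y
    using that by (simp_all add: join_on_dm meet_on_dm dm_join_in_dm dm_compl_closed Int_in_dm)
  have unit: "dm_join X (cm P) \<inter> P = X" "dm_join P (cm X) \<inter> X = X" if "X \<in> D" for X
    using that dm_compl_P zero_in_dm dm_subset[OF that]
      dm_join_absorb[OF that, of "cm P"] dm_join_absorb[OF P_in_dm, of "cm X"] dm_compl_eq lbs_subset
    by auto
  show ?thesis
    unfolding left_residuated_def dm_embed_def lbs_one
    using lattice_on_dm P_in_dm dm_subset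
    by (simp add: mult imp unit dm_residuation Int_in_dm dm_join_in_dm)
qed

end

lemma boolean_poset_not_le_witness:
  assumes B: "boolean_poset B le c zero one"
    and y: "y \<in> B" and u: "u \<in> B" and not_le: "\<not> le y u"
  shows "\<exists>z\<in>B. z \<noteq> zero \<and> le z y \<and> le z (c u)"
proof (rule ccontr)
  assume none: "\<not> ?thesis"
  interpret dm_orthoposet B le c zero one
    using B by unfold_locales (simp add: boolean_poset_def)
  have distrib: "L (U {u, c u} \<union> {y}) = L (U (L {u, y} \<union> L {c u, y}))"
    using B u y compl_in_P unfolding boolean_poset_def distributive_poset_def by blast
  have "y \<in> L (U {u, c u} \<union> {y})"
    using y by (simp add: ubs_compl[OF u] lbs_iff le_one refl_le)
  then have y_below: "y \<in> L (U (L {u, y} \<union> L {c u, y}))"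
    by (simp only: distrib)
  have "L {c u, y} \<subseteq> {zero}"
    using none by (auto simp: lbs_iff)
  then have "u \<in> U (L {u, y} \<union> L {c u, y})"
    using u zero_le by (auto simp: ubs_iff lbs_iff)
  then show False
    using y_below not_le by (auto simp: lbs_iff)
qed

locale horizontal_sum_of_boolean_posets =
  fixes P :: "'a set" and le :: "'a \<Rightarrow> 'a \<Rightarrow> bool" and c :: "'a \<Rightarrow> 'a"
    and zero one :: 'a and Lam :: "'i set" and Q :: "'i \<Rightarrow> 'a set"
  assumes bounded: "bounded_poset P le zero one"
    and hsum: "horizontal_sum P le c zero one Lam Q"
begin

lemma
  shows P_eq_components: "P = (\<Union>a\<in>Lam. Q a)"
    and component_boolean: "a \<in> Lam \<Longrightarrow> boolean_poset (Q a) le c zero one"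
    and components_Int: "a \<in> Lam \<Longrightarrow> b \<in> Lam \<Longrightarrow> a \<noteq> b \<Longrightarrow> Q a \<inter> Q b = {zero, one}"
    and le_common_component:
      "x \<in> P \<Longrightarrow> y \<in> P \<Longrightarrow> le x y \<Longrightarrow> \<exists>a\<in>Lam. x \<in> Q a \<and> y \<in> Q a"
  using hsum unfolding horizontal_sum_def by blast+

lemma component_orthoposet: "a \<in> Lam \<Longrightarrow> dm_orthoposet (Q a) le c zero one"
  using component_boolean by unfold_locales (simp add: boolean_poset_def)

lemma in_component: "x \<in> P \<Longrightarrow> \<exists>a\<in>Lam. x \<in> Q a"
  using P_eq_components by blast

lemma component_subset: "a \<in> Lam \<Longrightarrow> Q a \<subseteq> P"
  using P_eq_components by blast

lemma compl_in_component: "a \<in> Lam \<Longrightarrow> x \<in> Q a \<Longrightarrow> c x \<in> Q a"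
  by (rule dm_orthoposet.compl_in_P[OF component_orthoposet])

lemma component_unique:
  "a \<in> Lam \<Longrightarrow> b \<in> Lam \<Longrightarrow> x \<in> Q a \<Longrightarrow> x \<in> Q b \<Longrightarrow> x \<noteq> zero \<Longrightarrow> x \<noteq> one \<Longrightarrow> a = b"
  using components_Int by blast

lemma complementation: "poset_with_complementation P le c zero one"
proof (rule poset_with_complementationI[OF bounded])
  fix x assume "x \<in> P"
  then obtain a where a: "a \<in> Lam" "x \<in> Q a" using in_component by blast
  then show "c x \<in> P" using compl_in_component component_subset by blast
  show "c (c x) = x" using dm_orthoposet.compl_compl[OF component_orthoposet] a by blast
  show "x = zero" if "le x (c x)"
    using dm_orthoposet.le_compl_self[OF component_orthoposet] compl_in_component a that by blast
next
  fix x y assume "x \<in> P" "y \<in> P" "le x y"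
  then show "le (c y) (c x)"
    using le_common_component dm_orthoposet.compl_antimono[OF component_orthoposet] by blast
qed

sublocale dm_orthoposet P le c zero one
  by unfold_locales (rule complementation)

lemma ubs_across_components:
  assumes a: "a \<in> Lam" and b: "b \<in> Lam" and ab: "a \<noteq> b"
    and x: "x \<in> Q a" "x \<noteq> zero" "x \<noteq> one"
    and y: "y \<in> Q b" "y \<noteq> zero" "y \<noteq> one"
  shows "U {x, y} = {one}"
proof -
  have "w = one" if w: "w \<in> U {x, y}" for w
  proof (rule ccontr)
    assume w_one: "w \<noteq> one"
    have xy: "x \<in> P" "y \<in> P" using x y a b component_subset by blast+
    have "w \<in> P" "le x w" "le y w" using w by (auto simp: ubs_iff)
    moreover have "w \<noteq> zero" using \<open>le x w\<close> xy x antisym_le zero_le zero_in_P by blast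
    ultimately have "w \<in> Q a" "w \<in> Q b"
      using le_common_component[of x w] le_common_component[of y w] xy
        component_unique[of _ a x] component_unique[of _ b y] a b x y by metis+
    then show False using component_unique[OF a b] \<open>w \<noteq> zero\<close> w_one ab by blast
  qed
  moreover have "one \<in> U {x, y}"
    using x y a b component_subset le_one one_in_P by (auto simp: ubs_iff)
  ultimately show ?thesis by blast
qed

lemma dm_across_components_eq_P:
  assumes Y: "Y \<in> D" and a: "a \<in> Lam" and b: "b \<in> Lam" and ab: "a \<noteq> b"
    and x: "x \<in> Y" "x \<in> Q a" "x \<noteq> zero" "x \<noteq> one"
    and y: "y \<in> Y" "y \<in> Q b" "y \<noteq> zero" "y \<noteq> one"
  shows "Y = P"
proof -
  have "U Y \<subseteq> U {x, y}" using x y by (intro ubs_antimono) blast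
  then have "L {one} \<subseteq> L (U Y)"
    using ubs_across_components[OF a b ab x(2-4) y(2-4)] by (intro lbs_antimono) simp
  then show ?thesis using Y dm_subset dm_closed lbs_one by blast
qed

lemma dm_compl_meets_within_component:
  assumes X: "X \<in> D" and Y: "Y \<in> D" and a: "a \<in> Lam"
    and y: "y \<in> Y" "y \<in> Q a" and u: "u \<in> U X" "u \<in> Q a" "\<not> le y u"
  shows "\<exists>z\<in>cm X \<inter> Y. z \<noteq> zero"
proof -
  obtain z where z: "z \<in> Q a" "z \<noteq> zero" "le z y" "le z (c u)"
    using boolean_poset_not_le_witness[OF component_boolean[OF a]] y u by blast
  then have "z \<in> cm X \<inter> Y"
    using in_dm_compl_if_le_compl_ubs[OF dm_subset[OF X] u(1)] dm_down_closed[OF Y y(1)]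
      component_subset[OF a] by blast
  with z show ?thesis by blast
qed

lemma dm_orthomodular_criterion:
  assumes X: "X \<in> D" and Y: "Y \<in> D" and XY: "X \<subseteq> Y" and orth: "cm X \<inter> Y = {zero}"
  shows "X = Y"
proof (rule ccontr)
  assume "X \<noteq> Y"
  then obtain y where y: "y \<in> Y" "y \<notin> X" using XY by blast
  have XP: "X \<subseteq> P" and yP: "y \<in> P" using X Y y dm_subset by blast+
  have Y_ne_P: "Y \<noteq> P"
    using orth dm_eq_P_if_compl_eq_zero[OF X] dm_compl_closed[OF X] dm_subset \<open>X \<noteq> Y\<close> by blast
  have y_zero: "y \<noteq> zero" using y zero_in_dm X by blast
  have y_one: "y \<noteq> one" using Y_ne_P dm_down_closed[OF Y] y le_one dm_subset[OF Y] by blast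
  obtain a where a: "a \<in> Lam" "y \<in> Q a" using in_component yP by blast
  have "y \<notin> L (U X)" using y dm_closed[OF X] by simp
  then obtain u where u: "u \<in> U X" "\<not> le y u" using yP unfolding lbs_iff by blast
  have uP: "u \<in> P" using u ubs_subset by blast
  have "u \<notin> Q a"
    using dm_compl_meets_within_component[OF X Y a(1) y(1) a(2) u(1) _ u(2)] orth by blast
  have "\<not> X \<subseteq> {zero}"
  proof
    assume "X \<subseteq> {zero}"
    then have "P \<subseteq> cm X" using dm_compl_antimono dm_compl_zero by metis
    then show False using orth y(1) yP y_zero by blast
  qed
  then obtain x where x: "x \<in> X" "x \<noteq> zero" by blast
  have xu: "le x u" using u x by (auto simp: ubs_iff)
  have "u \<noteq> one" using \<open>u \<notin> Q a\<close> a dm_orthoposet.one_in_P[OF component_orthoposet] by blast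
  then have x_one: "x \<noteq> one" using xu uP XP x antisym_le le_one one_in_P by blast
  obtain b where b: "b \<in> Lam" "x \<in> Q b" "u \<in> Q b"
    using le_common_component xu XP x uP by blast
  have "a \<noteq> b" using b \<open>u \<notin> Q a\<close> by blast
  then have "Y = P"
    using dm_across_components_eq_P[OF Y a(1) b(1) _ y(1) a(2) y_zero y_one] x XY b x_one by blast
  with Y_ne_P show False ..
qed

sublocale dm_orthomodular P le c zero one
  by unfold_locales (rule dm_orthomodular_criterion)

end

theorem corollary1:
  fixes P :: "'a set" and le :: "'a \<Rightarrow> 'a \<Rightarrow> bool" and c :: "'a \<Rightarrow> 'a"
    and zero one :: 'a and Lam :: "'i set" and Q :: "'i \<Rightarrow> 'a set"
  assumes "bounded_poset P le zero one"
    and "horizontal_sum P le c zero one Lam Q"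
  shows "complete_lattice_on (dm P le) (\<subseteq>)
    \<and> orthomodular_lattice (dm P le) (\<subseteq>) (dm_compl P le c)
        (dm_embed P le zero) (dm_embed P le one)
    \<and> left_residuated (dm P le) (\<subseteq>) (dm_embed P le one)
        (\<lambda>x y. meet_on (dm P le) (\<subseteq>)
                 (join_on (dm P le) (\<subseteq>) x (dm_compl P le c y)) y)
        (\<lambda>x y. join_on (dm P le) (\<subseteq>)
                 (meet_on (dm P le) (\<subseteq>) x y) (dm_compl P le c x))"
proof -
  interpret horizontal_sum_of_boolean_posets P le c zero one Lam Q
    using assms by unfold_locales
  show ?thesis
    using complete_lattice_on_dm orthomodular_lattice_dm left_residuated_dm by blast
qed

end
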